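(* Let $k$ be a positive integer, $S=\{6k+1,6k+2,9k+3\}$ and $G=\langle S\rangle$. For $i\in\mathbb{N}^*=\mathbb{N}\setminus\{0\}$ let $A_{i,k}=[(6k+1)i,\,(6k+1)i+i]$ and $B_{i,k}=[(6k+1)i+(3k+2),\,(6k+1)i+(3k+2)+i-1]$, and let $H_{2,k}=\{0\}\cup\bigcup_{i\in\mathbb{N}^*}(A_{i,k}\cup B_{i,k})$. Then: (1) $H_{2,k}$ is a submonoid of $(\mathbb{N},+,0)$ containing $S$; (2) $A_{i,k}<B_{i,k}$ for every $i\in[1,3k+1]$; (3) $B_{i,k}\le A_{i+1,k}$ for every $i\in[1,3k]$; (4) $[(6k+1)(3k)+(3k+2),\infty[\ \subseteq H_{2,k}$; (5) $G=H_{2,k}$; (6) $H_{2,k}$ is a $3$-permutation numerical semigroup.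
   Context: $\mathbb{N}=\{0,1,2,\dots\}$. A numerical semigroup is a submonoid $G$ of $(\mathbb{N},+,0)$ with $\mathbb{N}\setminus G$ finite; $\langle S\rangle$ is the submonoid generated by $S$. Writing the elements of a numerical semigroup $G$ as $0=g_0<g_1<g_2<\cdots$, $G$ is an $n$-permutation numerical semigroup if $G=\langle\{g_1,\dots,g_n\}\rangle$ and for every $k\in\mathbb{N}$ the tuple $(g_{kn+1}\bmod n,\dots,g_{kn+n}\bmod n)$ contains exactly one representative of each residue class mod $n$. Notation: $[a,b]=\{x\in\mathbb{N}:a\le x\le b\}$, $[a,\infty[=\{x\in\mathbb{N}:x\ge a\}$. For nonempty $A,B\subseteq\mathbb{N}$, $A<B$ (resp. $A\le B$) means $x<y$ (resp. $x\le y$) for all $x\in A$, $y\in B$. *)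

theory Defs
  imports Main "HOL-Library.Infinite_Set"
begin

definition submonoid_nat :: "nat set \<Rightarrow> bool" where
  "submonoid_nat M \<longleftrightarrow> 0 \<in> M \<and> (\<forall>x\<in>M. \<forall>y\<in>M. x + y \<in> M)"

definition gen_monoid :: "nat set \<Rightarrow> nat set" where
  "gen_monoid S = \<Inter> {M. submonoid_nat M \<and> S \<subseteq> M}"

definition numerical_semigroup :: "nat set \<Rightarrow> bool" where
  "numerical_semigroup G \<longleftrightarrow> submonoid_nat G \<and> finite (UNIV - G)"

text \<open>g_j = enumerate G j is the j-th element (from 0) of G in increasing order.\<close>
definition perm_numerical_semigroup :: "nat \<Rightarrow> nat set \<Rightarrow> bool" where
  "perm_numerical_semigroup n G \<longleftrightarrow>
     numerical_semigroup G \<and>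
     G = gen_monoid ((\<lambda>j. enumerate G j) ` {1..n}) \<and>
     (\<forall>k. bij_betw (\<lambda>j. enumerate G (k * n + j) mod n) {1..n} {..<n})"

definition A_set :: "nat \<Rightarrow> nat \<Rightarrow> nat set" where
  "A_set i k = {(6*k+1)*i .. (6*k+1)*i + i}"

definition B_set :: "nat \<Rightarrow> nat \<Rightarrow> nat set" where
  "B_set i k = {(6*k+1)*i + (3*k+2) .. (6*k+1)*i + (3*k+2) + i - 1}"

definition H2 :: "nat \<Rightarrow> nat set" where
  "H2 k = {0} \<union> (\<Union>i\<in>{1..}. A_set i k \<union> B_set i k)"

end

theory Submission
  imports Defs "HOL-Library.Discrete_Functions"
begin

text \<open>
  Write \<open>a = 6k+1\<close> and \<open>b = 3k+2\<close>, so that \<open>H2 k\<close> consists of \<open>0\<close> and the blocks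
  \<open>[ai, ai+i]\<close> and \<open>[ai+b, ai+b+i-1]\<close>, \<open>i \<ge> 1\<close>. Since \<open>2b = a+3\<close>, the sum of two blocks
  lies in a block, and every block element is a sum of the generators \<open>a\<close>, \<open>a+1\<close>, \<open>a+b\<close>.
  For \<open>i \<le> 3k\<close> the two blocks with index \<open>i\<close> occupy exactly the positions \<open>i\<^sup>2, \<dots>, i\<^sup>2+2i\<close>
  of the increasing enumeration, and from \<open>3ka+b\<close> on there are no gaps. So consecutive
  elements differ by \<open>1\<close> except after the positions \<open>i\<^sup>2+i\<close> and \<open>i\<^sup>2+2i\<close>, where the jumps are
  \<open>b-i\<close> and \<open>a-b-i+1\<close>; when such a position is not a multiple of \<open>3\<close>, the jump is
  \<open>1\<close> modulo \<open>3\<close>. Hence the elements at positions \<open>3m+1, 3m+2, 3m+3\<close> have three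
  consecutive residues modulo \<open>3\<close>.
\<close>

lemma submonoid_nat_mult: "submonoid_nat M \<Longrightarrow> x \<in> M \<Longrightarrow> n*x \<in> M"
  by (induction n) (auto simp: submonoid_nat_def)

lemma gen_monoid_eqI:
  assumes "submonoid_nat M" "S \<subseteq> M" "\<And>M'. submonoid_nat M' \<Longrightarrow> S \<subseteq> M' \<Longrightarrow> M \<subseteq> M'"
  shows "gen_monoid S = M"
  using assms unfolding gen_monoid_def by blast

lemma subset_gen_monoid: "S \<subseteq> gen_monoid S"
  unfolding gen_monoid_def by blast

lemma enumerate_Suc_eqI:
  fixes S :: "nat set"
  assumes "infinite S" "enumerate S j = x" "y \<in> S" "x < y" "\<And>z. x < z \<Longrightarrow> z < y \<Longrightarrow> z \<notin> S"
  shows "enumerate S (Suc j) = y"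
  unfolding enumerate_Suc''[OF assms(1)] using assms
  by (intro Least_equality) (auto simp: not_less[symmetric])

lemma enumerate_add_eqI:
  fixes S :: "nat set"
  assumes "infinite S" "enumerate S j = x" "{x..x + t} \<subseteq> S"
  shows "enumerate S (j + t) = x + t"
  using assms(3)
proof (induction t)
  case (Suc t)
  then have "enumerate S (j + t) = x + t" by (force intro: Suc.IH)
  moreover have "Suc (x + t) \<in> S" using Suc.prems by auto
  ultimately show ?case by (auto intro: enumerate_Suc_eqI[OF assms(1)])
qed (use assms(2) in simp)

lemma inj_on_add_mod:
  fixes r p :: nat
  shows "inj_on (\<lambda>x. (r + x) mod p) {..<p}"
proof (rule linorder_inj_onI)
  fix x y assume "x < y" "y \<in> {..<p}"
  then show "(r + x) mod p \<noteq> (r + y) mod p"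
    using mod_eq_dvd_iff_nat[of "r + x" "r + y" p] by (auto dest: dvd_imp_le)
qed auto

lemma bij_betw_shifted_residues:
  fixes r p :: nat
  shows "bij_betw (\<lambda>j. (r + (j - 1)) mod p) {1..p} {..<p}"
proof -
  have "bij_betw (\<lambda>j. j - 1) {1..p} {..<p}"
    by (rule bij_betw_byWitness[where f' = Suc]) auto
  moreover have "bij_betw (\<lambda>x. (r + x) mod p) {..<p} {..<p}"
  proof (cases "p = 0")
    case False
    then have "(\<lambda>x. (r + x) mod p) ` {..<p} \<subseteq> {..<p}" by auto
    then show ?thesis
      using inj_on_add_mod[of r p] by (simp add: bij_betw_def card_image card_subset_eq)
  qed simp
  ultimately show ?thesis using bij_betw_trans by (fastforce simp: comp_def)
qed

lemma bij_betw_residues_of_block: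
  fixes f :: "nat \<Rightarrow> nat"
  assumes step: "\<And>j. \<not> p dvd j \<Longrightarrow> f (Suc j) mod p = Suc (f j) mod p"
  shows "bij_betw (\<lambda>j. f (m*p + j) mod p) {1..p} {..<p}"
proof -
  have shift: "f (m*p + j) mod p = (f (m*p + 1) + (j - 1)) mod p" if "1 \<le> j" "j \<le> p" for j
    using that
  proof (induction j rule: nat_induct_at_least)
    case (Suc j)
    have "\<not> p dvd m*p + j"
      using Suc by (auto simp: dvd_add_right_iff dest: dvd_imp_le)
    then have "f (m*p + Suc j) mod p = Suc (f (m*p + j) mod p) mod p"
      using step by (simp add: mod_Suc_eq)
    with Suc show ?case by (simp add: mod_Suc_eq)
  qed simp
  show ?thesis
    by (rule bij_betw_cong[THEN iffD2, OF _ bij_betw_shifted_residues]) (simp add: shift)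
qed

definition block_monoid :: "nat \<Rightarrow> nat \<Rightarrow> nat set" where
  "block_monoid a b = {0} \<union> (\<Union>i\<in>{1..}. {a*i..a*i + i} \<union> {a*i + b..<a*i + b + i})"

lemma mem_block_monoid_iff:
  "y \<in> block_monoid a b \<longleftrightarrow>
     y = 0 \<or> (\<exists>i\<ge>1. a*i \<le> y \<and> y \<le> a*i + i \<or> a*i + b \<le> y \<and> y < a*i + b + i)"
  by (auto simp: block_monoid_def)

lemma block_monoid_memI_A: "1 \<le> i \<Longrightarrow> a*i \<le> y \<Longrightarrow> y \<le> a*i + i \<Longrightarrow> y \<in> block_monoid a b"
  unfolding mem_block_monoid_iff by blast

lemma block_monoid_memI_B: "1 \<le> i \<Longrightarrow> a*i + b \<le> y \<Longrightarrow> y < a*i + b + i \<Longrightarrow> y \<in> block_monoid a b"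
  unfolding mem_block_monoid_iff by blast

lemma H2_eq_block_monoid: "H2 k = block_monoid (6*k+1) (3*k+2)"
  by (auto simp: H2_def A_set_def B_set_def block_monoid_def)

lemma submonoid_block_monoid:
  assumes "a \<le> b + b" "b + b \<le> a + 3"
  shows "submonoid_nat (block_monoid a b)"
  unfolding submonoid_nat_def
proof (intro conjI ballI)
  show "0 \<in> block_monoid a b" by (simp add: mem_block_monoid_iff)
  fix x y assume x: "x \<in> block_monoid a b" and y: "y \<in> block_monoid a b"
  show "x + y \<in> block_monoid a b"
  proof (cases "x = 0 \<or> y = 0")
    case True
    then show ?thesis using x y by auto
  next
    case False
    then obtain i j where "1 \<le> i" "1 \<le> j"
      and x_cases: "a*i \<le> x \<and> x \<le> a*i + i \<or> a*i + b \<le> x \<and> x < a*i + b + i"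
      and y_cases: "a*j \<le> y \<and> y \<le> a*j + j \<or> a*j + b \<le> y \<and> y < a*j + b + j"
      using x y by (auto simp: mem_block_monoid_iff)
    moreover have "a*(i+j) = a*i + a*j" "a*(i+j+1) = a*i + a*j + a"
      by (simp_all add: algebra_simps)
    ultimately show ?thesis
      using assms x_cases y_cases
      by (elim disjE)
        (auto intro: block_monoid_memI_A[of "i+j"] block_monoid_memI_B[of "i+j"]
           block_monoid_memI_A[of "i+j+1"])
  qed
qed

lemma block_monoid_subset_submonoid:
  assumes M: "submonoid_nat M" and gens: "a \<in> M" "a + 1 \<in> M" "a + b \<in> M"
  shows "block_monoid a b \<subseteq> M"
proof
  have add: "u + v \<in> M" if "u \<in> M" "v \<in> M" for u v
    using M that unfolding submonoid_nat_def by blast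
  have comb: "r*a + e*(a+1) \<in> M" for r e
    using add submonoid_nat_mult[OF M] gens by blast
  fix y assume "y \<in> block_monoid a b"
  then consider "y = 0" | i where "a*i \<le> y" "y \<le> a*i + i"
    | i where "1 \<le> i" "a*i + b \<le> y" "y < a*i + b + i"
    unfolding mem_block_monoid_iff by blast
  then show "y \<in> M"
  proof cases
    case 1
    then show ?thesis using M by (simp add: submonoid_nat_def)
  next
    case (2 i)
    then obtain e r where "y = a*i + e" "i = r + e"
      by (metis add_le_cancel_left le_add_diff_inverse le_add_diff_inverse2)
    then have "y = r*a + e*(a+1)" by (simp add: algebra_simps)
    then show ?thesis using comb by metis
  next
    case (3 i)
    then obtain d r where "y = a*i + b + d" "i = Suc (r + d)"
      by (metis add_less_cancel_left le_add_diff_inverse less_imp_Suc_add add.commute)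
    then have "y = (a + b) + (r*a + d*(a+1))" by (simp add: algebra_simps)
    then show ?thesis using add[OF gens(3) comb] by metis
  qed
qed

lemma gen_monoid_block_monoid:
  assumes "a \<le> b + b" "b + b \<le> a + 3"
  shows "gen_monoid {a, a + 1, a + b} = block_monoid a b"
proof (rule gen_monoid_eqI)
  show "submonoid_nat (block_monoid a b)" using assms by (rule submonoid_block_monoid)
  show "{a, a + 1, a + b} \<subseteq> block_monoid a b"
    using block_monoid_memI_A[of 1 a] block_monoid_memI_B[of 1 a b] by auto
  show "block_monoid a b \<subseteq> M" if "submonoid_nat M" "{a, a + 1, a + b} \<subseteq> M" for M
    using that by (intro block_monoid_subset_submonoid) auto
qed

lemma block_monoid_atLeast:
  assumes "0 < a" "0 < n" "a \<le> b + n" "b \<le> n + 2"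
  shows "{a*n + b..} \<subseteq> block_monoid a b"
proof
  fix y assume y: "y \<in> {a*n + b..}"
  define i r where "i = y div a" and "r = y mod a"
  have y_eq: "y = a*i + r" and "r < a"
    using \<open>0 < a\<close> by (simp_all add: i_def r_def)
  have "n \<le> i"
  proof (rule ccontr)
    assume "\<not> n \<le> i"
    then have "a*(i+1) \<le> a*n" by (intro mult_le_mono2) simp
    then show False using y y_eq \<open>r < a\<close> by simp
  qed
  show "y \<in> block_monoid a b"
  proof (cases "r \<le> i")
    case True
    then show ?thesis using \<open>n \<le> i\<close> assms(2) y_eq by (intro block_monoid_memI_A[of i]) auto
  next
    case False
    have "b \<le> r"
    proof (rule ccontr)
      assume "\<not> b \<le> r"
      then have "i = n" using False \<open>n \<le> i\<close> assms(4) by linarith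
      then show False using y y_eq \<open>\<not> b \<le> r\<close> by simp
    qed
    then show ?thesis
      using \<open>n \<le> i\<close> \<open>r < a\<close> assms y_eq by (intro block_monoid_memI_B[of i]) auto
  qed
qed

lemma block_monoid_window:
  assumes y: "y \<in> block_monoid a b" and "a*i \<le> y" "y < a*(i+1)" "1 \<le> i" "b + i \<le> a + 1"
  shows "y \<le> a*i + i \<or> a*i + b \<le> y \<and> y < a*i + b + i"
proof -
  have "y \<noteq> 0" using assms(2-4) by (cases "a = 0") (auto simp: le_less)
  then obtain j where "1 \<le> j"
    and y_cases: "a*j \<le> y \<and> y \<le> a*j + j \<or> a*j + b \<le> y \<and> y < a*j + b + j"
    using y by (auto simp: mem_block_monoid_iff)
  consider "j < i" | "j = i" | "i < j" by linarith
  then show ?thesis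
  proof cases
    case 1
    then have "a*(j+1) \<le> a*i" by (intro mult_le_mono2) simp
    then show ?thesis using 1 y_cases assms(2,5) by auto
  next
    case 3
    then have "a*(i+1) \<le> a*j" by (intro mult_le_mono2) simp
    then show ?thesis using y_cases assms(3) by auto
  qed (use y_cases in auto)
qed

lemma block_monoid_ge:
  assumes "y \<in> block_monoid a b" "0 < y"
  shows "a \<le> y"
proof -
  obtain i where "1 \<le> i" "a*i \<le> y"
    using assms unfolding mem_block_monoid_iff by (metis le_add1 order_trans less_irrefl)
  moreover have "a*1 \<le> a*i" using \<open>1 \<le> i\<close> by (rule mult_le_mono2)
  ultimately show ?thesis by linarith
qed

context
  fixes a b n :: nat
  assumes a_eq: "a = 2*n + 1" and b_eq: "b = n + 2" and n_pos: "0 < n"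
begin

lemma block_monoid_tail: "{a*n + b..} \<subseteq> block_monoid a b"
  using n_pos by (intro block_monoid_atLeast) (simp_all add: a_eq b_eq)

lemma infinite_block_monoid: "infinite (block_monoid a b)"
  using block_monoid_tail infinite_Ici infinite_super by blast

lemma block_monoid_gap:
  assumes "z \<in> block_monoid a b" "1 \<le> i" "i \<le> n" "a*i + i < z" "z < a*(i+1)"
  shows "a*i + b \<le> z \<and> z < a*i + b + i"
  using block_monoid_window[OF assms(1) _ assms(5) assms(2)] assms(3,4) by (simp add: a_eq b_eq)

lemma enumerate_block:
  assumes i: "1 \<le> i" "i \<le> n" and start: "enumerate (block_monoid a b) (i^2) = a*i"
  shows enumerate_block_A: "e \<le> i \<Longrightarrow> enumerate (block_monoid a b) (i^2 + e) = a*i + e"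
    and enumerate_block_B: "d < i \<Longrightarrow> enumerate (block_monoid a b) (i^2 + i + 1 + d) = a*i + b + d"
proof -
  show A: "enumerate (block_monoid a b) (i^2 + e) = a*i + e" if "e \<le> i" for e
    using that i by (intro enumerate_add_eqI[OF infinite_block_monoid start])
      (auto intro: block_monoid_memI_A)
  have "enumerate (block_monoid a b) (Suc (i^2 + i)) = a*i + b"
  proof (rule enumerate_Suc_eqI[OF infinite_block_monoid A[OF order_refl]])
    show "a*i + b \<in> block_monoid a b" using i by (intro block_monoid_memI_B) auto
    show "a*i + i < a*i + b" using i by (simp add: b_eq)
    show "z \<notin> block_monoid a b" if "a*i + i < z" "z < a*i + b" for z
      using that block_monoid_gap[of z i] i by (auto simp: a_eq b_eq)
  qed
  then show "enumerate (block_monoid a b) (i^2 + i + 1 + d) = a*i + b + d" if "d < i" for d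
    using that i by (intro enumerate_add_eqI[OF infinite_block_monoid])
      (auto intro: block_monoid_memI_B[of i])
qed

lemma enumerate_square: "1 \<le> i \<Longrightarrow> i \<le> n \<Longrightarrow> enumerate (block_monoid a b) (i^2) = a*i"
proof (induction i rule: nat_induct_at_least)
  case base
  have "enumerate (block_monoid a b) (Suc 0) = a"
  proof (rule enumerate_Suc_eqI[OF infinite_block_monoid])
    show "enumerate (block_monoid a b) 0 = 0"
      by (auto simp: enumerate_0 mem_block_monoid_iff intro: Least_equality)
    show "a \<in> block_monoid a b" by (rule block_monoid_memI_A[of 1]) auto
    show "z \<notin> block_monoid a b" if "0 < z" "z < a" for z
      using that block_monoid_ge leD by blast
  qed (simp add: a_eq)
  then show ?case by simp
next
  case (Suc i)
  have last: "enumerate (block_monoid a b) (i^2 + 2*i) = a*i + b + (i - 1)"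
    using enumerate_block_B[of i "i - 1"] Suc by (simp add: mult_2 add.assoc)
  have "enumerate (block_monoid a b) (Suc (i^2 + 2*i)) = a*(Suc i)"
  proof (rule enumerate_Suc_eqI[OF infinite_block_monoid last])
    show "a*(Suc i) \<in> block_monoid a b" by (rule block_monoid_memI_A[of "Suc i"]) auto
    show "a*i + b + (i - 1) < a*(Suc i)" using Suc by (simp add: a_eq b_eq)
    show "z \<notin> block_monoid a b" if "a*i + b + (i - 1) < z" "z < a*(Suc i)" for z
      using that Suc block_monoid_gap[of z i] by (auto simp: a_eq b_eq)
  qed
  moreover have "Suc (i^2 + 2*i) = (Suc i)^2" by (simp add: power2_eq_square)
  ultimately show ?case by simp
qed

lemma enumerate_tail: "enumerate (block_monoid a b) (n^2 + n + 1 + t) = a*n + b + t"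
proof (rule enumerate_add_eqI[OF infinite_block_monoid])
  show "enumerate (block_monoid a b) (n^2 + n + 1) = a*n + b"
    using enumerate_block_B[OF _ order_refl enumerate_square[OF _ order_refl], of 0] n_pos by simp
  show "{a*n + b..a*n + b + t} \<subseteq> block_monoid a b"
    using block_monoid_tail by auto
qed

lemma enumerate_Suc_inside_blocks:
  assumes "1 \<le> i" "i \<le> n" "e < 2*i" "e \<noteq> i"
  shows "enumerate (block_monoid a b) (Suc (i^2 + e)) = Suc (enumerate (block_monoid a b) (i^2 + e))"
proof -
  note start = enumerate_square[OF assms(1,2)]
  show ?thesis
  proof (cases "e < i")
    case True
    then show ?thesis using enumerate_block_A[OF assms(1,2) start, of e]
        enumerate_block_A[OF assms(1,2) start, of "Suc e"] by simp
  next
    case False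
    define d where "d = e - i - 1"
    have "i^2 + e = i^2 + i + 1 + d" "Suc d < i" using False assms(3,4) by (simp_all add: d_def)
    then show ?thesis using enumerate_block_B[OF assms(1,2) start, of d]
        enumerate_block_B[OF assms(1,2) start, of "Suc d"] by (simp add: add.assoc)
  qed
qed

lemma enumerate_Suc_after_A_block:
  assumes "1 \<le> i" "i \<le> n" "i + g = b"
  shows "enumerate (block_monoid a b) (Suc (i^2 + i)) = enumerate (block_monoid a b) (i^2 + i) + g"
  using enumerate_block_A[OF assms(1,2) enumerate_square[OF assms(1,2)], of i]
    enumerate_block_B[OF assms(1,2) enumerate_square[OF assms(1,2)], of 0] assms by simp

lemma enumerate_Suc_after_B_block:
  assumes "1 \<le> i" "i + g = n" "0 < g"
  shows "enumerate (block_monoid a b) (Suc (i^2 + 2*i)) = enumerate (block_monoid a b) (i^2 + 2*i) + g"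
proof -
  have "i \<le> n" "Suc i \<le> n" using assms(2,3) by simp_all
  note start = enumerate_square[OF assms(1) \<open>i \<le> n\<close>]
  have "enumerate (block_monoid a b) (i^2 + 2*i) = a*i + b + (i - 1)"
    using enumerate_block_B[OF assms(1) \<open>i \<le> n\<close> start, of "i - 1"] assms(1)
    by (simp add: mult_2 add.assoc)
  moreover have "Suc (i^2 + 2*i) = (Suc i)^2" by (simp add: power2_eq_square)
  moreover have "a*(Suc i) = a*i + b + (i - 1) + g"
    using assms(1,2) by (simp add: a_eq b_eq)
  ultimately show ?thesis using enumerate_square[OF _ \<open>Suc i \<le> n\<close>] by simp
qed

lemma enumerate_block_monoid_Suc_mod_3:
  assumes "3 dvd n" "\<not> 3 dvd j"
  shows "enumerate (block_monoid a b) (Suc j) mod 3 = Suc (enumerate (block_monoid a b) j) mod 3"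
proof -
  have "\<exists>g. enumerate (block_monoid a b) (Suc j) = enumerate (block_monoid a b) j + g \<and> g mod 3 = 1"
  proof (cases "n^2 + n + 1 \<le> j")
    case True
    then obtain t where "j = n^2 + n + 1 + t" using le_Suc_ex by blast
    then show ?thesis using enumerate_tail[of t] enumerate_tail[of "Suc t"] by simp
  next
    case False
    define i where "i = floor_sqrt j"
    have "0 < j" using assms(2) by (rule contrapos_np) simp
    then have "1 \<le> i" by (simp add: i_def Suc_le_eq)
    have "i^2 \<le> j" "j < (Suc i)^2"
      unfolding i_def by (simp_all only: floor_sqrt_power2_le Suc_floor_sqrt_power2_gt)
    have "i \<le> n"
    proof (rule ccontr)
      assume "\<not> i \<le> n"
      then have "(Suc n)^2 \<le> i^2" by (intro power_mono) auto
      then show False using False \<open>i^2 \<le> j\<close> by (simp add: power2_eq_square)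
    qed
    define e where "e = j - i^2"
    have j: "j = i^2 + e" using \<open>i^2 \<le> j\<close> by (simp add: e_def)
    have "(Suc i)^2 = i^2 + 2*i + 1" by (simp add: power2_eq_square)
    then have "e \<le> 2*i" using j \<open>j < (Suc i)^2\<close> by linarith
    then consider "e < 2*i" "e \<noteq> i" | "e = i" | "e = 2*i" by linarith
    then show ?thesis
    proof cases
      case 1
      then show ?thesis using enumerate_Suc_inside_blocks[OF \<open>1 \<le> i\<close> \<open>i \<le> n\<close>] j
        by (intro exI[of _ 1]) simp
    next
      case 2
      have "i * (i + 1) = j" using j 2 by (simp add: power2_eq_square algebra_simps)
      then have "\<not> 3 dvd i" "\<not> 3 dvd i + 1" using assms(2) by (meson dvd_mult dvd_mult2)+
      obtain g where "i + g = n + 2" using \<open>i \<le> n\<close> le_add_diff_inverse trans_le_add1 by blast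
      then have "g mod 3 = 1" using \<open>\<not> 3 dvd i\<close> \<open>\<not> 3 dvd i + 1\<close> assms(1) by presburger
      then show ?thesis
        using enumerate_Suc_after_A_block[OF \<open>1 \<le> i\<close> \<open>i \<le> n\<close>] \<open>i + g = n + 2\<close> j 2
        by (auto simp: b_eq)
    next
      case 3
      have "i < n"
        using False j 3 \<open>i \<le> n\<close> n_pos by (cases "i = n") (simp_all add: power2_eq_square)
      have "i * (i + 2) = j" using j 3 by (simp add: power2_eq_square algebra_simps)
      then have "\<not> 3 dvd i" "\<not> 3 dvd i + 2" using assms(2) by (meson dvd_mult dvd_mult2)+
      obtain g where "i + g = n" "0 < g" using \<open>i < n\<close> less_imp_add_positive by blast
      then have "g mod 3 = 1" using \<open>\<not> 3 dvd i\<close> \<open>\<not> 3 dvd i + 2\<close> assms(1) by presburger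
      then show ?thesis
        using enumerate_Suc_after_B_block[OF \<open>1 \<le> i\<close>] \<open>i + g = n\<close> \<open>0 < g\<close> j 3 by auto
    qed
  qed
  then show ?thesis by (auto simp: mod_add_right_eq[symmetric])
qed

lemma enumerate_block_monoid_generators:
  "enumerate (block_monoid a b) ` {1..3} = {a, a + 1, a + b}"
proof -
  have start: "enumerate (block_monoid a b) 1 = a"
    using enumerate_square[of 1] n_pos by simp
  have "enumerate (block_monoid a b) 2 = a + 1"
    using enumerate_block_A[of 1 1] start n_pos by (simp add: numeral_2_eq_2)
  moreover have "enumerate (block_monoid a b) 3 = a + b"
    using enumerate_block_B[of 1 0] start n_pos by (simp add: numeral_3_eq_3)
  moreover have "{1..3::nat} = {1, 2, 3}" by auto
  ultimately show ?thesis using start by simp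
qed

lemma numerical_semigroup_block_monoid: "numerical_semigroup (block_monoid a b)"
proof -
  have "UNIV - block_monoid a b \<subseteq> {..<a*n + b}"
    using block_monoid_tail by (auto simp: not_less[symmetric])
  then have "finite (UNIV - block_monoid a b)" using finite_subset by blast
  moreover have "submonoid_nat (block_monoid a b)"
    by (rule submonoid_block_monoid) (simp_all add: a_eq b_eq)
  ultimately show ?thesis unfolding numerical_semigroup_def by blast
qed

lemma perm_numerical_semigroup_block_monoid:
  assumes "3 dvd n"
  shows "perm_numerical_semigroup 3 (block_monoid a b)"
  unfolding perm_numerical_semigroup_def
proof (intro conjI allI)
  show "numerical_semigroup (block_monoid a b)" by (rule numerical_semigroup_block_monoid)
  show "block_monoid a b = gen_monoid (enumerate (block_monoid a b) ` {1..3})"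
    unfolding enumerate_block_monoid_generators
    by (rule gen_monoid_block_monoid[symmetric]) (simp_all add: a_eq b_eq)
  show "bij_betw (\<lambda>j. enumerate (block_monoid a b) (m*3 + j) mod 3) {1..3} {..<3}" for m
    using enumerate_block_monoid_Suc_mod_3[OF assms] by (rule bij_betw_residues_of_block)
qed

end

theorem lemma4p2:
  fixes k :: nat and S G :: "nat set"
  assumes "0 < k"
    and "S = {6*k+1, 6*k+2, 9*k+3}"
    and "G = gen_monoid S"
  shows "(submonoid_nat (H2 k) \<and> S \<subseteq> H2 k)
    \<and> (\<forall>i\<in>{1..3*k+1}. \<forall>x\<in>A_set i k. \<forall>y\<in>B_set i k. x < y)
    \<and> (\<forall>i\<in>{1..3*k}. \<forall>x\<in>B_set i k. \<forall>y\<in>A_set (i+1) k. x \<le> y)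
    \<and> {(6*k+1)*(3*k)+(3*k+2)..} \<subseteq> H2 k
    \<and> G = H2 k
    \<and> perm_numerical_semigroup 3 (H2 k)"
proof -
  have params: "6*k+1 = 2*(3*k) + 1" "3*k+2 = 3*k + 2" "0 < 3*k" "3 dvd 3*k"
    using assms(1) by simp_all
  have "6*k+1 + 1 = 6*k+2" "6*k+1 + (3*k+2) = 9*k+3" by simp_all
  then have S: "S = {6*k+1, 6*k+1 + 1, 6*k+1 + (3*k+2)}"
    using assms(2) by (simp only:)
  have G: "G = H2 k"
    unfolding assms(3) S H2_eq_block_monoid by (rule gen_monoid_block_monoid) simp_all
  moreover have "submonoid_nat (H2 k)"
    unfolding H2_eq_block_monoid by (rule submonoid_block_monoid) simp_all
  moreover have "S \<subseteq> H2 k"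
    using subset_gen_monoid G assms(3) by blast
  moreover have "\<forall>i\<in>{1..3*k+1}. \<forall>x\<in>A_set i k. \<forall>y\<in>B_set i k. x < y"
    by (auto simp: A_set_def B_set_def)
  moreover have "\<forall>i\<in>{1..3*k}. \<forall>x\<in>B_set i k. \<forall>y\<in>A_set (i+1) k. x \<le> y"
    by (auto simp: A_set_def B_set_def)
  moreover have "{(6*k+1)*(3*k)+(3*k+2)..} \<subseteq> H2 k"
    unfolding H2_eq_block_monoid by (rule block_monoid_tail[OF params(1-3)])
  moreover have "perm_numerical_semigroup 3 (H2 k)"
    unfolding H2_eq_block_monoid by (rule perm_numerical_semigroup_block_monoid[OF params])
  ultimately show ?thesis by blast
qed

end
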